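(* Fix $\gamma\in[0,1)$, $R_{\max}>0$ and $K\ge1$, and let $\tau_k=\frac{2k-1}{2K}$. For every MDP with discount factor $\gamma$ whose reward distributions are all supported on $[-R_{\max},R_{\max}]$ and every policy $\pi$, let $\eta$ be the QDRL fixed point, i.e. the collection of distributions of the form $\eta(x,a)=\frac1K\sum_{k=1}^K\delta_{z_k(x,a)}$ satisfying $\eta=\Pi_{W_1}\mathcal T^\pi\eta$, and let $\hat s_k(x,a)=F^{-1}_{\eta(x,a)}(\tau_k)$ be the learnt quantile statistics. Then $$\sup_{(x,a)\in\mathcal X\times\mathcal A}\frac1K\sum_{k=1}^K\big|F^{-1}_{\eta^\pi(x,a)}(\tau_k)-\hat s_k(x,a)\big|\le\frac{2R_{\max}(5-2\gamma)}{(1-\gamma)^2K}.$$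
   Context: MDP setting: finite state space $\mathcal X$, finite action space $\mathcal A$, transition kernel $p$, discount $\gamma$, reward distributions $\mathcal R(\cdot\mid x,a)$; policy $\pi:\mathcal X\to\mathscr P(\mathcal A)$; $\eta^\pi(x,a)$ is the law of the return $\sum_t\gamma^tR_t$ from $X_0=x,A_0=a$ with $R_t\sim\mathcal R(\cdot\mid X_t,A_t)$, $X_{t+1}\sim p(\cdot\mid X_t,A_t)$, $A_{t+1}\sim\pi(\cdot\mid X_{t+1})$. Distributional Bellman operator: $(\mathcal T^\pi\eta)(x,a)=\sum_{x',a'}p(x'\mid x,a)\pi(a'\mid x')\int\mathcal R(\mathrm dr\mid x,a)(f_{r,\gamma})_\#\eta(x',a')$ with $f_{r,\gamma}(z)=r+\gamma z$. For a distribution $\mu$ with CDF $F_\mu$, $F_\mu^{-1}(\tau)=\inf\{z:F_\mu(z)\ge\tau\}$, and $\Pi_{W_1}(\mu)=\frac1K\sum_{k=1}^K\delta_{F_\mu^{-1}(\tau_k)}$, applied statewise to collections. *)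

theory Defs
  imports "HOL-Probability.Probability"
begin

text \<open>Distributions on the reals are represented as measures with sets = sets borel.\<close>

definition tau :: "nat \<Rightarrow> nat \<Rightarrow> real" where
  "tau K k = (2 * real k - 1) / (2 * real K)"

definition quantile :: "real measure \<Rightarrow> real \<Rightarrow> real" where
  "quantile \<mu> t = Inf {z. t \<le> cdf \<mu> z}"

definition dist_bellman ::
  "real \<Rightarrow> ('s \<Rightarrow> 'a \<Rightarrow> 's pmf) \<Rightarrow> ('s \<Rightarrow> 'a pmf) \<Rightarrow> ('s \<Rightarrow> 'a \<Rightarrow> real measure)
   \<Rightarrow> ('s \<Rightarrow> 'a \<Rightarrow> real measure) \<Rightarrow> 's \<Rightarrow> 'a \<Rightarrow> real measure" where
  "dist_bellman \<gamma> p \<pi> R \<eta> x a =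
     measure_pmf (p x a) \<bind> (\<lambda>x'. measure_pmf (\<pi> x') \<bind> (\<lambda>a'.
       R x a \<bind> (\<lambda>r. distr (\<eta> x' a') borel (\<lambda>z. r + \<gamma> * z))))"

definition unif_dirac :: "nat \<Rightarrow> (nat \<Rightarrow> real) \<Rightarrow> real measure" where
  "unif_dirac K w = distr (measure_pmf (pmf_of_set {1..K})) borel w"

definition proj_W1 :: "nat \<Rightarrow> real measure \<Rightarrow> real measure" where
  "proj_W1 K \<mu> = unif_dirac K (\<lambda>k. quantile \<mu> (tau K k))"

text \<open>Law of the truncated return sum_{t<n} gamma^t R_t from X_0 = x, A_0 = a:
  sample R_0 ~ R(x,a), X_1 ~ p(x,a), A_1 ~ pi(X_1), then continue from (X_1,A_1).\<close>
primrec horizon_return ::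
  "real \<Rightarrow> ('s \<Rightarrow> 'a \<Rightarrow> 's pmf) \<Rightarrow> ('s \<Rightarrow> 'a pmf) \<Rightarrow> ('s \<Rightarrow> 'a \<Rightarrow> real measure)
   \<Rightarrow> nat \<Rightarrow> 's \<Rightarrow> 'a \<Rightarrow> real measure" where
  "horizon_return \<gamma> p \<pi> R 0 x a = return borel 0"
| "horizon_return \<gamma> p \<pi> R (Suc n) x a =
     measure_pmf (p x a) \<bind> (\<lambda>x'. measure_pmf (\<pi> x') \<bind> (\<lambda>a'.
       R x a \<bind> (\<lambda>r. distr (horizon_return \<gamma> p \<pi> R n x' a') borel (\<lambda>z. r + \<gamma> * z))))"

text \<open>Law eta^pi(x,a) of the full return sum_t gamma^t R_t: the (weak) limit of the laws
  of the partial sums (which converge a.s. since rewards are bounded and gamma < 1).\<close>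
definition return_dist ::
  "real \<Rightarrow> ('s \<Rightarrow> 'a \<Rightarrow> 's pmf) \<Rightarrow> ('s \<Rightarrow> 'a pmf) \<Rightarrow> ('s \<Rightarrow> 'a \<Rightarrow> real measure)
   \<Rightarrow> 's \<Rightarrow> 'a \<Rightarrow> real measure" where
  "return_dist \<gamma> p \<pi> R x a =
     (THE \<mu>. real_distribution \<mu> \<and> weak_conv_m (\<lambda>n. horizon_return \<gamma> p \<pi> R n x a) \<mu>)"

end

(* All laws that occur are supported in [-Vmax, Vmax], Vmax = Rmax / (1 - \<gamma>), and are compared in
   the Wasserstein-1 distance W(\<mu>, \<nu>) = \<integral> |F\<^sub>\<mu> - F\<^sub>\<nu>|.  The distributional Bellman operator is a
   \<gamma>-contraction for W, and the quantile projection moves such a law by at most Vmax / K, because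
   the fraction of the levels \<tau>\<^sub>k lying below any value f is within 1 / (2K) of f.  Starting from
   the horizon-n return laws H\<^sub>n = T\<^sup>n \<delta>\<^sub>0, induction gives W(H\<^sub>n, \<eta>) \<le> 2 Vmax \<gamma>\<^sup>n + C for the
   fixed point \<eta> = \<Pi> T \<eta>, where C = Vmax / (K (1 - \<gamma>)).  The law \<eta>\<^sup>\<pi> of the return is obtained
   explicitly as the weak limit of the H\<^sub>n, from which it differs by a horizontal shift of at most
   2 Vmax \<gamma>\<^sup>n; hence W(\<eta>\<^sup>\<pi>, \<eta>) \<le> C.  Finally, between two projected laws W is exactly the mean
   absolute difference of their quantiles at the levels \<tau>\<^sub>k, and the triangle inequality through
   \<eta>\<^sup>\<pi> and \<eta> bounds the quantile error by 2 Vmax / K + C. *)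

theory Submission
  imports Defs
begin

section \<open>Distribution functions and quantiles\<close>

lemma real_distribution_cdf_mono: "real_distribution \<mu> \<Longrightarrow> x \<le> y \<Longrightarrow> cdf \<mu> x \<le> cdf \<mu> y"
  by (metis real_distribution.finite_borel_measure_M finite_borel_measure.cdf_nondecreasing)

lemma real_distribution_cdf_nonneg: "real_distribution \<mu> \<Longrightarrow> 0 \<le> cdf \<mu> x"
  by (metis real_distribution.finite_borel_measure_M finite_borel_measure.cdf_nonneg)

lemma borel_measurable_cdf [measurable]: "real_distribution \<mu> \<Longrightarrow> cdf \<mu> \<in> borel_measurable borel"
  by (rule borel_measurable_mono) (simp add: mono_def real_distribution_cdf_mono)

lemma quantile_le_iff:
  assumes "real_distribution \<mu>" "0 < \<tau>" "\<tau> < 1"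
  shows "quantile \<mu> \<tau> \<le> x \<longleftrightarrow> \<tau> \<le> cdf \<mu> x"
proof -
  interpret cdf_distribution \<mu>
    by (rule cdf_distribution.intro) (rule assms(1))
  show ?thesis
    unfolding quantile_def by (rule pseudoinverse[OF assms(2,3), symmetric])
qed

lemma real_distribution_unif_dirac: "real_distribution (unif_dirac K w)"
  unfolding unif_dirac_def
  by (rule prob_space.real_distribution_distr) (auto simp: prob_space_measure_pmf)

lemma measure_unif_dirac:
  assumes "K \<ge> 1" "A \<in> sets borel"
  shows "measure (unif_dirac K w) A = card {k\<in>{1..K}. w k \<in> A} / K"
proof -
  have "measure (unif_dirac K w) A = measure (measure_pmf (pmf_of_set {1..K})) (w -` A)"
    unfolding unif_dirac_def using assms by (subst measure_distr) auto
  also have "\<dots> = card ({1..K} \<inter> w -` A) / card {1..K}"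
    using assms by (subst measure_pmf_of_set) auto
  also have "{1..K} \<inter> w -` A = {k\<in>{1..K}. w k \<in> A}"
    by auto
  finally show ?thesis
    by simp
qed

lemma cdf_unif_dirac: "K \<ge> 1 \<Longrightarrow> cdf (unif_dirac K w) t = card {k\<in>{1..K}. w k \<le> t} / K"
  unfolding cdf_def using measure_unif_dirac[of K "{..t}" w] by simp

definition bounded_distribution :: "real \<Rightarrow> real measure \<Rightarrow> bool" where
  "bounded_distribution B \<mu> \<longleftrightarrow>
     real_distribution \<mu> \<and> (\<forall>t. t < -B \<longrightarrow> cdf \<mu> t = 0) \<and> (\<forall>t. B \<le> t \<longrightarrow> cdf \<mu> t = 1)"

lemma bounded_distribution_mono:
  "bounded_distribution B \<mu> \<Longrightarrow> B \<le> B' \<Longrightarrow> bounded_distribution B' \<mu>"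
  unfolding bounded_distribution_def by auto

lemma bounded_distribution_cdf_diff:
  assumes "bounded_distribution B \<mu>" "bounded_distribution B \<nu>"
  shows "\<bar>cdf \<mu> t - cdf \<nu> t\<bar> \<le> (if -B \<le> t \<and> t < B then 1 else 0)"
  using assms real_distribution.cdf_bounded_prob[of \<mu> t] real_distribution.cdf_bounded_prob[of \<nu> t]
    real_distribution_cdf_nonneg[of \<mu> t] real_distribution_cdf_nonneg[of \<nu> t]
  unfolding bounded_distribution_def by (auto simp: abs_le_iff)

section \<open>The Wasserstein-1 distance on the real line\<close>

definition wasserstein1 :: "real measure \<Rightarrow> real measure \<Rightarrow> ennreal" where
  "wasserstein1 \<mu> \<nu> = (\<integral>\<^sup>+t. ennreal \<bar>cdf \<mu> t - cdf \<nu> t\<bar> \<partial>lborel)"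

definition cdf_shift_close :: "real \<Rightarrow> real measure \<Rightarrow> real measure \<Rightarrow> bool" where
  "cdf_shift_close \<epsilon> \<mu> \<nu> \<longleftrightarrow> (\<forall>s. cdf \<mu> s \<le> cdf \<nu> (s + \<epsilon>) \<and> cdf \<nu> s \<le> cdf \<mu> (s + \<epsilon>))"

lemma wasserstein1_commute: "wasserstein1 \<mu> \<nu> = wasserstein1 \<nu> \<mu>"
  unfolding wasserstein1_def by (simp add: abs_minus_commute)

lemma wasserstein1_triangle:
  assumes "real_distribution \<mu>" "real_distribution \<nu>" "real_distribution \<rho>"
  shows "wasserstein1 \<mu> \<nu> \<le> wasserstein1 \<mu> \<rho> + wasserstein1 \<rho> \<nu>"
proof -
  have "wasserstein1 \<mu> \<nu>
      \<le> (\<integral>\<^sup>+t. ennreal \<bar>cdf \<mu> t - cdf \<rho> t\<bar> + ennreal \<bar>cdf \<rho> t - cdf \<nu> t\<bar> \<partial>lborel)"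
    unfolding wasserstein1_def
    by (rule nn_integral_mono) (simp add: ennreal_plus[symmetric] del: ennreal_plus)
  also have "\<dots> = wasserstein1 \<mu> \<rho> + wasserstein1 \<rho> \<nu>"
    unfolding wasserstein1_def using assms by (intro nn_integral_add) measurable
  finally show ?thesis .
qed

lemma wasserstein1_le_if_cdf_diff_le:
  assumes "\<And>t. \<bar>cdf \<mu> t - cdf \<nu> t\<bar> \<le> (if -B \<le> t \<and> t < B then c else 0)" "0 \<le> c" "0 \<le> B"
  shows "wasserstein1 \<mu> \<nu> \<le> ennreal (2 * B * c)"
proof -
  have "wasserstein1 \<mu> \<nu> \<le> (\<integral>\<^sup>+t. ennreal c * indicator {-B..<B} t \<partial>lborel)"
    unfolding wasserstein1_def
  proof (rule nn_integral_mono)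
    show "ennreal \<bar>cdf \<mu> t - cdf \<nu> t\<bar> \<le> ennreal c * indicator {-B..<B} t" for t
      using assms(1)[of t] by (auto simp: indicator_def intro!: ennreal_leI)
  qed
  also have "\<dots> = ennreal (2 * B * c)"
    using assms by (simp add: nn_integral_cmult_indicator ennreal_mult[symmetric] mult.commute)
  finally show ?thesis .
qed

lemma wasserstein1_bounded_le:
  "bounded_distribution B \<mu> \<Longrightarrow> bounded_distribution B \<nu> \<Longrightarrow> 0 \<le> B \<Longrightarrow> wasserstein1 \<mu> \<nu> \<le> ennreal (2 * B)"
  using wasserstein1_le_if_cdf_diff_le[of \<mu> \<nu> B 1] bounded_distribution_cdf_diff[of B \<mu> \<nu>] by simp

lemma bounded_distribution_cdf_shift_close:
  "bounded_distribution B \<mu> \<Longrightarrow> bounded_distribution B \<nu> \<Longrightarrow> 0 \<le> B \<Longrightarrow> cdf_shift_close (2 * B) \<mu> \<nu>"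
  unfolding cdf_shift_close_def bounded_distribution_def
  by (smt (verit) real_distribution.cdf_bounded_prob real_distribution_cdf_nonneg)

lemma cdf_gap_le_if_cdf_shift_close:
  assumes \<nu>: "real_distribution \<nu>" and "0 \<le> \<epsilon>" and close: "cdf_shift_close \<epsilon> \<mu> \<nu>"
  shows "\<bar>cdf \<mu> t - cdf \<nu> t\<bar> \<le> measure \<nu> {t - \<epsilon><..t + \<epsilon>}"
proof -
  interpret \<nu>: real_distribution \<nu>
    by (rule \<nu>)
  have "cdf \<nu> (t - \<epsilon>) \<le> cdf \<mu> t" "cdf \<mu> t \<le> cdf \<nu> (t + \<epsilon>)"
    using close unfolding cdf_shift_close_def by (metis diff_add_cancel)+
  moreover have "cdf \<nu> (t - \<epsilon>) \<le> cdf \<nu> t" "cdf \<nu> t \<le> cdf \<nu> (t + \<epsilon>)"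
    using \<open>0 \<le> \<epsilon>\<close> by (auto intro!: real_distribution_cdf_mono \<nu>)
  ultimately have "\<bar>cdf \<mu> t - cdf \<nu> t\<bar> \<le> cdf \<nu> (t + \<epsilon>) - cdf \<nu> (t - \<epsilon>)"
    by linarith
  also have "\<dots> = measure \<nu> {t - \<epsilon><..t + \<epsilon>}"
    using \<open>0 \<le> \<epsilon>\<close> by (cases "\<epsilon> = 0") (simp_all add: \<nu>.cdf_diff_eq)
  finally show ?thesis .
qed

(* Integrating the window bound over t counts every point of \<nu> with weight 2 \<epsilon> (Fubini). *)
lemma wasserstein1_le_if_cdf_shift_close:
  assumes \<mu>: "real_distribution \<mu>" and \<nu>: "real_distribution \<nu>" and "0 \<le> \<epsilon>"
    and close: "cdf_shift_close \<epsilon> \<mu> \<nu>"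
  shows "wasserstein1 \<mu> \<nu> \<le> ennreal (2 * \<epsilon>)"
proof -
  interpret \<nu>: real_distribution \<nu>
    by (rule \<nu>)
  have "wasserstein1 \<mu> \<nu> \<le> (\<integral>\<^sup>+t. (\<integral>\<^sup>+x. indicator {x - \<epsilon>..<x + \<epsilon>} t \<partial>\<nu>) \<partial>lborel)"
    unfolding wasserstein1_def
  proof (rule nn_integral_mono)
    fix t
    have "ennreal \<bar>cdf \<mu> t - cdf \<nu> t\<bar> \<le> emeasure \<nu> {t - \<epsilon><..t + \<epsilon>}"
      using cdf_gap_le_if_cdf_shift_close[OF \<nu> \<open>0 \<le> \<epsilon>\<close> close]
      by (simp add: \<nu>.emeasure_eq_measure ennreal_leI)
    also have "\<dots> = (\<integral>\<^sup>+x. indicator {t - \<epsilon><..t + \<epsilon>} x \<partial>\<nu>)"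
      by simp
    also have "\<dots> = (\<integral>\<^sup>+x. indicator {x - \<epsilon>..<x + \<epsilon>} t \<partial>\<nu>)"
      by (intro nn_integral_cong) (auto simp: indicator_def)
    finally show "ennreal \<bar>cdf \<mu> t - cdf \<nu> t\<bar> \<le> (\<integral>\<^sup>+x. indicator {x - \<epsilon>..<x + \<epsilon>} t \<partial>\<nu>)" .
  qed
  also have "\<dots> = (\<integral>\<^sup>+x. (\<integral>\<^sup>+t. indicator {x - \<epsilon>..<x + \<epsilon>} t \<partial>lborel) \<partial>\<nu>)"
  proof (rule pair_sigma_finite.Fubini')
    show "pair_sigma_finite \<nu> lborel"
      by (intro pair_sigma_finite.intro \<nu>.sigma_finite_measure_axioms lborel.sigma_finite_measure_axioms)
    have "(\<lambda>(x, t). indicator {x - \<epsilon>..<x + \<epsilon>} t :: ennreal)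
        = (\<lambda>xt. if fst xt - \<epsilon> \<le> snd xt \<and> snd xt < fst xt + \<epsilon> then 1 else 0)"
      by (auto simp: indicator_def)
    also have "\<dots> \<in> borel_measurable (\<nu> \<Otimes>\<^sub>M lborel)"
      by (subst measurable_cong_sets[OF sets_pair_measure_cong[OF \<nu>.events_eq_borel sets_lborel] refl])
        measurable
    finally show "(\<lambda>(x, t). indicator {x - \<epsilon>..<x + \<epsilon>} t :: ennreal) \<in> borel_measurable (\<nu> \<Otimes>\<^sub>M lborel)" .
  qed
  also have "\<dots> = ennreal (2 * \<epsilon>)"
    using \<open>0 \<le> \<epsilon>\<close> \<nu>.emeasure_space_1 by simp
  finally show ?thesis .
qed

section \<open>The quantile projection\<close>

lemma quantile_bounded:
  assumes "bounded_distribution B \<mu>" "0 < \<tau>" "\<tau> < 1"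
  shows "\<bar>quantile \<mu> \<tau>\<bar> \<le> B"
proof -
  have \<mu>: "real_distribution \<mu>"
    using assms(1) by (simp add: bounded_distribution_def)
  have "quantile \<mu> \<tau> \<le> B"
    using quantile_le_iff[OF \<mu> assms(2,3), of B] assms(1,3) by (simp add: bounded_distribution_def)
  moreover have "-B \<le> quantile \<mu> \<tau>"
  proof (rule ccontr)
    assume "\<not> -B \<le> quantile \<mu> \<tau>"
    then have "cdf \<mu> (quantile \<mu> \<tau>) = 0"
      using assms(1) by (simp add: bounded_distribution_def)
    moreover have "\<tau> \<le> cdf \<mu> (quantile \<mu> \<tau>)"
      using quantile_le_iff[OF \<mu> assms(2,3), of "quantile \<mu> \<tau>"] by simp
    ultimately show False
      using assms(2) by simp
  qed
  ultimately show ?thesis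
    by simp
qed

lemma tau_bounds: "1 \<le> k \<Longrightarrow> k \<le> K \<Longrightarrow> 0 < tau K k \<and> tau K k < 1"
  by (auto simp: tau_def field_simps)

lemma cdf_proj_W1:
  assumes "real_distribution \<mu>" "K \<ge> 1"
  shows "cdf (proj_W1 K \<mu>) t = card {k\<in>{1..K}. tau K k \<le> cdf \<mu> t} / K"
proof -
  have "{k\<in>{1..K}. quantile \<mu> (tau K k) \<le> t} = {k\<in>{1..K}. tau K k \<le> cdf \<mu> t}"
    using quantile_le_iff[OF assms(1)] tau_bounds by auto
  then show ?thesis
    unfolding proj_W1_def cdf_unif_dirac[OF assms(2)] by simp
qed

(* The levels tau K k are the midpoints of the K equal cells of [0, 1], so exactly
   \<lfloor>K f + 1/2\<rfloor> of them lie below f. *)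
lemma card_tau_le:
  assumes "K \<ge> 1" "0 \<le> f" "f \<le> 1"
  shows "\<bar>card {k\<in>{1..K}. tau K k \<le> f} / K - f\<bar> \<le> 1 / (2 * K)"
proof -
  define y where "y = f * K + 1/2"
  define n where "n = nat \<lfloor>y\<rfloor>"
  have K: "(0::real) < K"
    using assms by simp
  have "0 \<le> y"
    unfolding y_def using assms by simp
  then have "real n = of_int \<lfloor>y\<rfloor>"
    unfolding n_def by simp
  then have n: "real n \<le> y" "y < real n + 1"
    using of_int_floor_le[of y] real_of_int_floor_add_one_gt[of y] by linarith+
  have "y < K + 1"
    unfolding y_def using mult_left_le_one_le[of "real K" f] assms by linarith
  with n have "real n < real (K + 1)"
    by simp
  then have "n \<le> K"
    by (simp only: of_nat_less_iff)
  have tau_iff: "tau K k \<le> f \<longleftrightarrow> k \<le> n" for k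
  proof -
    have "tau K k = (real k - 1/2) / K"
      unfolding tau_def by (simp add: field_simps)
    then have "tau K k \<le> f \<longleftrightarrow> real k - 1/2 \<le> f * K"
      using K by (simp add: pos_divide_le_eq)
    also have "\<dots> \<longleftrightarrow> real k \<le> y"
      unfolding y_def by linarith
    also have "\<dots> \<longleftrightarrow> k \<le> n"
      unfolding n_def using \<open>0 \<le> y\<close> by (simp add: le_nat_iff le_floor_iff)
    finally show ?thesis .
  qed
  have "{k\<in>{1..K}. tau K k \<le> f} = {1..n}"
    unfolding tau_iff using \<open>n \<le> K\<close> by auto
  then have card: "card {k\<in>{1..K}. tau K k \<le> f} = n"
    by simp
  have "\<bar>real n / K - f\<bar> = \<bar>real n - f * K\<bar> / K"
    using K by (simp add: field_simps abs_divide)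
  also have "\<dots> \<le> (1/2) / K"
    using n unfolding y_def by (intro divide_right_mono) linarith+
  finally show ?thesis
    unfolding card by simp
qed

lemma wasserstein1_proj_W1_le:
  assumes "bounded_distribution B \<mu>" "K \<ge> 1" "0 \<le> B"
  shows "wasserstein1 (proj_W1 K \<mu>) \<mu> \<le> ennreal (B / K)"
proof -
  have \<mu>: "real_distribution \<mu>"
    using assms(1) by (simp add: bounded_distribution_def)
  have "{k\<in>{1..K}. tau K k \<le> 0} = {}" "{k\<in>{1..K}. tau K k \<le> 1} = {1..K}"
    using tau_bounds by fastforce+
  then have "\<bar>cdf (proj_W1 K \<mu>) t - cdf \<mu> t\<bar> \<le> (if -B \<le> t \<and> t < B then 1 / (2 * K) else 0)" for t
    using assms card_tau_le[OF assms(2) real_distribution_cdf_nonneg[OF \<mu>]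
        real_distribution.cdf_bounded_prob[OF \<mu>], of t]
    unfolding cdf_proj_W1[OF \<mu> assms(2)] by (auto simp: bounded_distribution_def not_le)
  then have "wasserstein1 (proj_W1 K \<mu>) \<mu> \<le> ennreal (2 * B * (1 / (2 * K)))"
    by (rule wasserstein1_le_if_cdf_diff_le) (use assms in auto)
  then show ?thesis
    by simp
qed

lemma mono_on_quantile_tau:
  assumes "real_distribution \<mu>"
  shows "mono_on {1..K} (\<lambda>k. quantile \<mu> (tau K k))"
proof (rule mono_onI)
  fix i j
  assume "i \<in> {1..K}" "j \<in> {1..K}" "i \<le> j"
  then have i: "0 < tau K i" "tau K i < 1" and j: "0 < tau K j" "tau K j < 1"
    using tau_bounds by auto
  have "tau K i \<le> tau K j"
    using \<open>i \<le> j\<close> by (auto simp: tau_def divide_right_mono)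
  also have "tau K j \<le> cdf \<mu> (quantile \<mu> (tau K j))"
    using quantile_le_iff[OF assms j, of "quantile \<mu> (tau K j)"] by simp
  finally show "quantile \<mu> (tau K i) \<le> quantile \<mu> (tau K j)"
    using quantile_le_iff[OF assms i] by simp
qed

lemma abs_card_diff_nested:
  assumes "finite A" "finite B" "A \<subseteq> B \<or> B \<subseteq> A"
  shows "\<bar>real (card A) - real (card B)\<bar> = card ((A - B) \<union> (B - A))"
  using assms(3)
proof
  assume "A \<subseteq> B"
  then have "(A - B) \<union> (B - A) = B - A" and "card A \<le> card B"
    using assms(2) by (auto intro: card_mono)
  then show ?thesis
    using \<open>A \<subseteq> B\<close> assms(1) by (simp add: card_Diff_subset of_nat_diff)
next
  assume "B \<subseteq> A"
  then have "(A - B) \<union> (B - A) = A - B" and "card B \<le> card A"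
    using assms(1) by (auto intro: card_mono)
  then show ?thesis
    using \<open>B \<subseteq> A\<close> assms(2) by (simp add: card_Diff_subset of_nat_diff)
qed

(* Sublevel sets of sorted sequences are initial segments of {1..K}. *)
lemma sublevel_sets_nested_if_sorted:
  fixes w v :: "nat \<Rightarrow> real"
  assumes "mono_on {1..K} w" "mono_on {1..K} v"
  shows "{k\<in>{1..K}. w k \<le> t} \<subseteq> {k\<in>{1..K}. v k \<le> t} \<or> {k\<in>{1..K}. v k \<le> t} \<subseteq> {k\<in>{1..K}. w k \<le> t}"
proof (cases "{k\<in>{1..K}. w k \<le> t} \<subseteq> {k\<in>{1..K}. v k \<le> t}")
  case False
  then obtain k where k: "k \<in> {1..K}" "w k \<le> t" "\<not> v k \<le> t"
    by blast
  have "j \<in> {k\<in>{1..K}. w k \<le> t}" if j: "j \<in> {k\<in>{1..K}. v k \<le> t}" for j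
  proof -
    have "\<not> k \<le> j"
      using mono_onD[OF assms(2), of k j] k j by auto
    then have "w j \<le> w k"
      using mono_onD[OF assms(1), of j k] k j by auto
    then show ?thesis
      using k j by auto
  qed
  then show ?thesis
    by blast
qed simp

lemma cdf_unif_dirac_gap_sorted:
  assumes "K \<ge> 1" "mono_on {1..K} w" "mono_on {1..K} v"
  shows "\<bar>cdf (unif_dirac K w) t - cdf (unif_dirac K v) t\<bar>
    = (\<Sum>k=1..K. indicator {min (w k) (v k)..<max (w k) (v k)} t) / K"
proof -
  let ?W = "{k\<in>{1..K}. w k \<le> t}" and ?V = "{k\<in>{1..K}. v k \<le> t}"
  have "\<bar>real (card ?W) - real (card ?V)\<bar> = card ((?W - ?V) \<union> (?V - ?W))"
    by (intro abs_card_diff_nested sublevel_sets_nested_if_sorted assms) simp_all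
  also have "(?W - ?V) \<union> (?V - ?W) = {k\<in>{1..K}. t \<in> {min (w k) (v k)..<max (w k) (v k)}}"
    by auto
  also have "real (card \<dots>) = (\<Sum>k=1..K. indicator {min (w k) (v k)..<max (w k) (v k)} t)"
    by (simp add: sum.inter_filter[symmetric] indicator_def Int_def conj_assoc)
  finally show ?thesis
    using assms(1) by (simp add: cdf_unif_dirac diff_divide_distrib[symmetric] abs_divide)
qed

lemma wasserstein1_unif_dirac_sorted:
  assumes "K \<ge> 1" "mono_on {1..K} w" "mono_on {1..K} v"
  shows "wasserstein1 (unif_dirac K w) (unif_dirac K v) = ennreal ((1 / K) * (\<Sum>k=1..K. \<bar>w k - v k\<bar>))"
proof -
  let ?I = "\<lambda>k. {min (w k) (v k)..<max (w k) (v k)}"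
  have "ennreal ((\<Sum>k=1..K. indicator (?I k) t) / K) = (\<Sum>k=1..K. ennreal (1 / K) * indicator (?I k) t)" for t
  proof -
    have "(\<Sum>k=1..K. indicator (?I k) t) / K = (\<Sum>k=1..K. (1 / K) * indicator (?I k) t)"
      by (simp add: sum_divide_distrib)
    then have "ennreal ((\<Sum>k=1..K. indicator (?I k) t) / K) = (\<Sum>k=1..K. ennreal ((1 / K) * indicator (?I k) t))"
      by (simp add: sum_ennreal)
    also have "\<dots> = (\<Sum>k=1..K. ennreal (1 / K) * indicator (?I k) t)"
      by (intro sum.cong refl) (simp add: indicator_def)
    finally show ?thesis .
  qed
  then have "wasserstein1 (unif_dirac K w) (unif_dirac K v)
      = (\<integral>\<^sup>+t. (\<Sum>k\<in>{1..K}. ennreal (1 / K) * indicator (?I k) t) \<partial>lborel)"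
    unfolding wasserstein1_def cdf_unif_dirac_gap_sorted[OF assms] by simp
  also have "\<dots> = (\<Sum>k\<in>{1..K}. ennreal (1 / K) * emeasure lborel (?I k))"
    by (subst nn_integral_sum) (auto simp: nn_integral_cmult_indicator)
  also have "\<dots> = (\<Sum>k\<in>{1..K}. ennreal ((1 / K) * \<bar>w k - v k\<bar>))"
  proof (intro sum.cong refl)
    fix k
    have "emeasure lborel (?I k) = ennreal (max (w k) (v k) - min (w k) (v k))"
      by simp
    also have "max (w k) (v k) - min (w k) (v k) = \<bar>w k - v k\<bar>"
      by (simp add: max_def min_def)
    finally show "ennreal (1 / K) * emeasure lborel (?I k) = ennreal ((1 / K) * \<bar>w k - v k\<bar>)"
      by (simp add: ennreal_mult[symmetric])
  qed
  also have "\<dots> = ennreal ((1 / K) * (\<Sum>k=1..K. \<bar>w k - v k\<bar>))"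
    by (simp add: sum_ennreal sum_distrib_left)
  finally show ?thesis .
qed

lemma bounded_unif_dirac:
  assumes "K \<ge> 1" "\<And>k. k \<in> {1..K} \<Longrightarrow> \<bar>w k\<bar> \<le> B"
  shows "bounded_distribution B (unif_dirac K w)"
proof -
  have "{k\<in>{1..K}. w k \<le> t} = {}" if "t < -B" for t
    using assms(2) that by (force simp: abs_le_iff)
  moreover have "{k\<in>{1..K}. w k \<le> t} = {1..K}" if "B \<le> t" for t
    using assms(2) that by (force simp: abs_le_iff)
  ultimately show ?thesis
    using assms(1) by (simp add: bounded_distribution_def real_distribution_unif_dirac cdf_unif_dirac)
qed

lemma abs_le_if_bounded_unif_dirac:
  assumes "K \<ge> 1" "bounded_distribution B (unif_dirac K w)" "k \<in> {1..K}"
  shows "\<bar>w k\<bar> \<le> B"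
proof -
  have K: "(0::real) < K"
    using assms(1) by simp
  have "-B \<le> w k"
  proof (rule ccontr)
    define c where "c = card {j\<in>{1..K}. w j \<le> w k}"
    assume "\<not> -B \<le> w k"
    then have "cdf (unif_dirac K w) (w k) = 0"
      using assms(2) by (simp add: bounded_distribution_def)
    moreover have "0 < c"
      unfolding c_def using assms(3) by (intro card_gt_0_iff[THEN iffD2]) auto
    moreover have "cdf (unif_dirac K w) (w k) = c / K"
      unfolding c_def by (rule cdf_unif_dirac[OF assms(1)])
    ultimately show False
      using K by simp
  qed
  moreover have "w k \<le> B"
  proof (rule ccontr)
    define c where "c = card {j\<in>{1..K}. w j \<le> B}"
    assume "\<not> w k \<le> B"
    then have "{j\<in>{1..K}. w j \<le> B} \<subset> {1..K}"
      using assms(3) by blast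
    then have "c < card {1..K}"
      unfolding c_def by (intro psubset_card_mono) simp_all
    moreover have "cdf (unif_dirac K w) B = c / K"
      unfolding c_def by (rule cdf_unif_dirac[OF assms(1)])
    moreover have "cdf (unif_dirac K w) B = 1"
      using assms(2) by (simp add: bounded_distribution_def)
    ultimately show False
      using K by simp
  qed
  ultimately show ?thesis
    by simp
qed

lemma bounded_proj_W1:
  assumes "bounded_distribution B \<mu>" "K \<ge> 1"
  shows "bounded_distribution B (proj_W1 K \<mu>)"
  unfolding proj_W1_def
proof (rule bounded_unif_dirac[OF assms(2)])
  fix k
  assume "k \<in> {1..K}"
  then show "\<bar>quantile \<mu> (tau K k)\<bar> \<le> B"
    using tau_bounds[of k K] by (intro quantile_bounded[OF assms(1)]) auto
qed

section \<open>The distributional Bellman operator\<close>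

lemma real_distribution_iff_prob_algebra: "real_distribution M \<longleftrightarrow> M \<in> space (prob_algebra borel)"
  by (auto simp: space_prob_algebra real_distribution_def real_distribution_axioms_def)

lemma emeasure_atMost_eq_cdf: "real_distribution \<mu> \<Longrightarrow> emeasure \<mu> {..t} = ennreal (cdf \<mu> t)"
  by (simp add: cdf_def finite_measure.emeasure_eq_measure real_distribution_def prob_space_def)

lemma
  assumes A: "A \<in> space (prob_algebra M)" and B: "B \<in> M \<rightarrow>\<^sub>M prob_algebra borel"
  shows real_distribution_bind: "real_distribution (A \<bind> B)"
    and cdf_bind: "cdf (A \<bind> B) t = (\<integral>x. cdf (B x) t \<partial>A)"
proof -
  show "real_distribution (A \<bind> B)"
    using prob_space_bind'[OF A B] sets_bind'[OF A B] by (simp add: real_distribution_iff_prob_algebra space_prob_algebra)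
  interpret A: prob_space A
    using A by (simp add: space_prob_algebra)
  have sets_A: "sets A = sets M"
    using A by (simp add: space_prob_algebra)
  have B_x: "real_distribution (B x)" if "x \<in> space A" for x
    using measurable_space[OF B, of x] that sets_eq_imp_space_eq[OF sets_A]
    by (simp add: real_distribution_iff_prob_algebra)
  have "(\<lambda>x. cdf (B x) t) \<in> borel_measurable A"
    unfolding cdf_def measurable_cong_sets[OF sets_A refl]
    by (rule measurable_compose[OF B measurable_measure_prob_algebra]) simp
  then have "integrable A (\<lambda>x. cdf (B x) t)"
    by (intro A.integrable_const_bound[where B=1] AE_I2)
      (auto simp: B_x real_distribution.cdf_bounded_prob real_distribution_cdf_nonneg)
  have "emeasure (A \<bind> B) {..t} = (\<integral>\<^sup>+x. emeasure (B x) {..t} \<partial>A)"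
    by (rule emeasure_bind_prob_algebra[OF A B]) simp
  also have "\<dots> = (\<integral>\<^sup>+x. ennreal (cdf (B x) t) \<partial>A)"
    by (intro nn_integral_cong) (simp add: B_x emeasure_atMost_eq_cdf)
  also have "\<dots> = ennreal (\<integral>x. cdf (B x) t \<partial>A)"
    by (intro nn_integral_eq_integral \<open>integrable A (\<lambda>x. cdf (B x) t)\<close>)
      (simp add: B_x real_distribution_cdf_nonneg)
  finally show "cdf (A \<bind> B) t = (\<integral>x. cdf (B x) t \<partial>A)"
    unfolding cdf_def measure_def
    by (simp add: B_x real_distribution_cdf_nonneg integral_nonneg_AE)
qed

lemma
  fixes P :: "'x::finite pmf"
  assumes "\<And>x. real_distribution (f x)"
  shows real_distribution_bind_pmf: "real_distribution (measure_pmf P \<bind> f)"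
    and cdf_bind_pmf: "cdf (measure_pmf P \<bind> f) t = (\<Sum>x\<in>UNIV. pmf P x * cdf (f x) t)"
proof -
  have P: "measure_pmf P \<in> space (prob_algebra (count_space UNIV))"
    by (simp add: space_prob_algebra prob_space_measure_pmf)
  have f: "f \<in> count_space UNIV \<rightarrow>\<^sub>M prob_algebra borel"
    using assms by (simp add: real_distribution_iff_prob_algebra)
  show "real_distribution (measure_pmf P \<bind> f)"
    by (rule real_distribution_bind[OF P f])
  show "cdf (measure_pmf P \<bind> f) t = (\<Sum>x\<in>UNIV. pmf P x * cdf (f x) t)"
    unfolding cdf_bind[OF P f] by (subst integral_measure_pmf_real[of UNIV]) (auto simp: mult.commute)
qed

lemma wasserstein1_bind_pmf_le:
  fixes P :: "'x::finite pmf"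
  assumes f: "\<And>x. real_distribution (f x)" and g: "\<And>x. real_distribution (g x)"
  shows "wasserstein1 (measure_pmf P \<bind> f) (measure_pmf P \<bind> g)
    \<le> (\<Sum>x\<in>UNIV. ennreal (pmf P x) * wasserstein1 (f x) (g x))"
proof -
  have "ennreal \<bar>cdf (measure_pmf P \<bind> f) t - cdf (measure_pmf P \<bind> g) t\<bar>
      \<le> (\<Sum>x\<in>UNIV. ennreal (pmf P x) * ennreal \<bar>cdf (f x) t - cdf (g x) t\<bar>)" for t
  proof -
    have "\<bar>cdf (measure_pmf P \<bind> f) t - cdf (measure_pmf P \<bind> g) t\<bar>
        = \<bar>\<Sum>x\<in>UNIV. pmf P x * (cdf (f x) t - cdf (g x) t)\<bar>"
      by (simp add: cdf_bind_pmf f g right_diff_distrib sum_subtractf)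
    also have "\<dots> \<le> (\<Sum>x\<in>UNIV. pmf P x * \<bar>cdf (f x) t - cdf (g x) t\<bar>)"
      by (rule order_trans[OF sum_abs]) (simp add: abs_mult)
    finally have "ennreal \<bar>cdf (measure_pmf P \<bind> f) t - cdf (measure_pmf P \<bind> g) t\<bar>
        \<le> ennreal (\<Sum>x\<in>UNIV. pmf P x * \<bar>cdf (f x) t - cdf (g x) t\<bar>)"
      by (rule ennreal_leI)
    also have "\<dots> = (\<Sum>x\<in>UNIV. ennreal (pmf P x) * ennreal \<bar>cdf (f x) t - cdf (g x) t\<bar>)"
      by (subst sum_ennreal[symmetric]) (auto simp: ennreal_mult)
    finally show ?thesis .
  qed
  then have "wasserstein1 (measure_pmf P \<bind> f) (measure_pmf P \<bind> g)
      \<le> (\<integral>\<^sup>+t. (\<Sum>x\<in>UNIV. ennreal (pmf P x) * ennreal \<bar>cdf (f x) t - cdf (g x) t\<bar>) \<partial>lborel)"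
    unfolding wasserstein1_def by (rule nn_integral_mono)
  also have "\<dots> = (\<Sum>x\<in>UNIV. ennreal (pmf P x) * wasserstein1 (f x) (g x))"
    unfolding wasserstein1_def using f g by (simp add: nn_integral_sum nn_integral_cmult)
  finally show ?thesis .
qed

definition bootstrap_law :: "real \<Rightarrow> real measure \<Rightarrow> real measure \<Rightarrow> real measure" where
  "bootstrap_law \<gamma> Rm \<eta> = Rm \<bind> (\<lambda>r. distr \<eta> borel (\<lambda>z. r + \<gamma> * z))"

lemma dist_bellman_eq_bootstrap_law:
  "dist_bellman \<gamma> p \<pi> R \<eta> x a =
     measure_pmf (p x a) \<bind> (\<lambda>x'. measure_pmf (\<pi> x') \<bind> (\<lambda>a'. bootstrap_law \<gamma> (R x a) (\<eta> x' a')))"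
  unfolding dist_bellman_def bootstrap_law_def ..

lemma
  assumes \<eta>: "real_distribution \<eta>" and Rm: "real_distribution Rm"
  shows real_distribution_bootstrap_law: "real_distribution (bootstrap_law \<gamma> Rm \<eta>)"
    and cdf_bootstrap_law: "cdf (bootstrap_law \<gamma> Rm \<eta>) t = (\<integral>r. measure \<eta> {z. r + \<gamma> * z \<le> t} \<partial>Rm)"
proof -
  interpret \<eta>: real_distribution \<eta>
    by (rule \<eta>)
  have "(\<lambda>r. distr \<eta> borel (\<lambda>z. r + \<gamma> * z)) \<in> borel \<rightarrow>\<^sub>M prob_algebra borel"
  proof (rule measurable_prob_algebraI)
    show "(\<lambda>r. distr \<eta> borel (\<lambda>z. r + \<gamma> * z)) \<in> borel \<rightarrow>\<^sub>M subprob_algebra borel"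
      by (rule measurable_distr2[where M=borel])
        (use \<eta> in \<open>auto simp: space_subprob_algebra real_distribution_def prob_space_imp_subprob_space\<close>)
  qed (simp add: \<eta>.prob_space_distr)
  moreover have "Rm \<in> space (prob_algebra borel)"
    using Rm by (simp add: real_distribution_iff_prob_algebra)
  moreover have "cdf (distr \<eta> borel (\<lambda>z. r + \<gamma> * z)) t = measure \<eta> {z. r + \<gamma> * z \<le> t}" for r
    unfolding cdf_def by (subst measure_distr) (auto simp: vimage_def)
  ultimately show "real_distribution (bootstrap_law \<gamma> Rm \<eta>)"
    and "cdf (bootstrap_law \<gamma> Rm \<eta>) t = (\<integral>r. measure \<eta> {z. r + \<gamma> * z \<le> t} \<partial>Rm)"
    unfolding bootstrap_law_def by (simp_all add: real_distribution_bind cdf_bind)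
qed

lemma measure_affine_le_pos: "0 < \<gamma> \<Longrightarrow> measure \<eta> {z. r + \<gamma> * z \<le> t} = cdf \<eta> ((t - r) / \<gamma>)"
  unfolding cdf_def by (rule arg_cong[where f="measure \<eta>"]) (auto simp: field_simps)

lemma measure_affine_le_zero:
  assumes "real_distribution \<eta>" "\<gamma> = 0"
  shows "measure \<eta> {z. r + \<gamma> * z \<le> t} = (if r \<le> t then 1 else 0)"
proof -
  interpret real_distribution \<eta>
    by (rule assms(1))
  have "prob UNIV = 1"
    using prob_space by simp
  then show ?thesis
    using assms(2) by simp
qed

lemma borel_measurable_measure_affine_le:
  assumes "real_distribution \<eta>" "0 \<le> \<gamma>"
  shows "(\<lambda>r. measure \<eta> {z. r + \<gamma> * z \<le> t}) \<in> borel_measurable borel"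
proof (cases "\<gamma> = 0")
  case True
  show ?thesis
    unfolding measure_affine_le_zero[OF assms(1) True] by simp
next
  case False
  then show ?thesis
    using assms by (simp add: measure_affine_le_pos)
qed

lemma integrable_measure_affine_le:
  assumes "real_distribution \<eta>" "0 \<le> \<gamma>" "real_distribution Rm"
  shows "integrable Rm (\<lambda>r. measure \<eta> {z. r + \<gamma> * z \<le> t})"
proof -
  interpret Rm: real_distribution Rm
    by (rule assms(3))
  interpret \<eta>: real_distribution \<eta>
    by (rule assms(1))
  show ?thesis
    using borel_measurable_measure_affine_le[OF assms(1,2)]
    by (intro Rm.integrable_const_bound[where B=1] AE_I2)
      auto
qed

lemma cdf_bootstrap_law_shift:
  assumes \<eta>: "real_distribution \<eta>" and \<eta>': "real_distribution \<eta>'" and Rm: "real_distribution Rm"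
    and "0 \<le> \<gamma>" and shift: "\<And>s. cdf \<eta> s \<le> cdf \<eta>' (s + \<epsilon>)"
  shows "cdf (bootstrap_law \<gamma> Rm \<eta>) t \<le> cdf (bootstrap_law \<gamma> Rm \<eta>') (t + \<gamma> * \<epsilon>)"
  unfolding cdf_bootstrap_law[OF \<eta> Rm] cdf_bootstrap_law[OF \<eta>' Rm]
proof (rule integral_mono)
  show "measure \<eta> {z. r + \<gamma> * z \<le> t} \<le> measure \<eta>' {z. r + \<gamma> * z \<le> t + \<gamma> * \<epsilon>}" for r
  proof (cases "\<gamma> = 0")
    case True
    show ?thesis
      unfolding measure_affine_le_zero[OF \<eta> True] measure_affine_le_zero[OF \<eta>' True] using True by simp
  next
    case False
    with \<open>0 \<le> \<gamma>\<close> have "0 < \<gamma>"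
      by simp
    moreover have "(t + \<gamma> * \<epsilon> - r) / \<gamma> = (t - r) / \<gamma> + \<epsilon>"
      using \<open>0 < \<gamma>\<close> by (simp add: field_simps)
    ultimately show ?thesis
      using shift by (simp add: measure_affine_le_pos)
  qed
qed (intro integrable_measure_affine_le assms)+

lemma
  assumes \<eta>: "bounded_distribution B \<eta>" and "0 \<le> \<gamma>" and r: "\<bar>r\<bar> \<le> Rmax"
  shows measure_affine_le_below: "t < -(Rmax + \<gamma> * B) \<Longrightarrow> measure \<eta> {z. r + \<gamma> * z \<le> t} = 0"
    and measure_affine_le_above: "Rmax + \<gamma> * B \<le> t \<Longrightarrow> measure \<eta> {z. r + \<gamma> * z \<le> t} = 1"
proof -
  have \<eta>': "real_distribution \<eta>"
    using \<eta> by (simp add: bounded_distribution_def)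
  show "measure \<eta> {z. r + \<gamma> * z \<le> t} = 0" if t: "t < -(Rmax + \<gamma> * B)"
  proof (cases "\<gamma> = 0")
    case True
    show ?thesis
      unfolding measure_affine_le_zero[OF \<eta>' True] using True t r by (simp add: abs_le_iff)
  next
    case False
    with \<open>0 \<le> \<gamma>\<close> have "0 < \<gamma>"
      by simp
    moreover have "(t - r) / \<gamma> < -B"
      using \<open>0 < \<gamma>\<close> t r by (simp add: pos_divide_less_eq abs_le_iff algebra_simps)
    ultimately show ?thesis
      using \<eta> by (simp add: measure_affine_le_pos bounded_distribution_def)
  qed
  show "measure \<eta> {z. r + \<gamma> * z \<le> t} = 1" if t: "Rmax + \<gamma> * B \<le> t"
  proof (cases "\<gamma> = 0")
    case True
    show ?thesis
      unfolding measure_affine_le_zero[OF \<eta>' True] using True t r by (simp add: abs_le_iff)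
  next
    case False
    with \<open>0 \<le> \<gamma>\<close> have "0 < \<gamma>"
      by simp
    moreover have "B \<le> (t - r) / \<gamma>"
      using \<open>0 < \<gamma>\<close> t r by (simp add: pos_le_divide_eq abs_le_iff algebra_simps)
    ultimately show ?thesis
      using \<eta> by (simp add: measure_affine_le_pos bounded_distribution_def)
  qed
qed

lemma bounded_bootstrap_law:
  assumes \<eta>: "bounded_distribution B \<eta>" and Rm: "real_distribution Rm"
    and supp: "AE r in Rm. r \<in> {-Rmax..Rmax}" and "0 \<le> \<gamma>"
  shows "bounded_distribution (Rmax + \<gamma> * B) (bootstrap_law \<gamma> Rm \<eta>)"
proof -
  have \<eta>': "real_distribution \<eta>"
    using \<eta> by (simp add: bounded_distribution_def)
  interpret Rm: real_distribution Rm
    by (rule Rm)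
  have "cdf (bootstrap_law \<gamma> Rm \<eta>) t = 0" if "t < -(Rmax + \<gamma> * B)" for t
  proof -
    have "AE r in Rm. measure \<eta> {z. r + \<gamma> * z \<le> t} = 0"
      using supp by eventually_elim (simp add: measure_affine_le_below[OF \<eta> \<open>0 \<le> \<gamma>\<close> _ that] abs_le_iff)
    then show ?thesis
      unfolding cdf_bootstrap_law[OF \<eta>' Rm] by (rule integral_eq_zero_AE)
  qed
  moreover have "cdf (bootstrap_law \<gamma> Rm \<eta>) t = 1" if "Rmax + \<gamma> * B \<le> t" for t
  proof -
    have "AE r in Rm. measure \<eta> {z. r + \<gamma> * z \<le> t} = 1"
      using supp by eventually_elim (simp add: measure_affine_le_above[OF \<eta> \<open>0 \<le> \<gamma>\<close> _ that] abs_le_iff)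
    then have "(\<integral>r. measure \<eta> {z. r + \<gamma> * z \<le> t} \<partial>Rm) = (\<integral>r. 1 \<partial>Rm)"
      using borel_measurable_measure_affine_le[OF \<eta>' \<open>0 \<le> \<gamma>\<close>] by (intro integral_cong_AE) auto
    then show ?thesis
      unfolding cdf_bootstrap_law[OF \<eta>' Rm] using Rm.prob_space by simp
  qed
  ultimately show ?thesis
    using real_distribution_bootstrap_law[OF \<eta>' Rm] by (simp add: bounded_distribution_def)
qed

lemma integrable_cdf_affine:
  assumes "real_distribution \<eta>" "real_distribution Rm" "0 < \<gamma>"
  shows "integrable Rm (\<lambda>r. cdf \<eta> ((t - r) / \<gamma>))"
  using integrable_measure_affine_le[OF assms(1) less_imp_le[OF assms(3)] assms(2)]
  by (simp add: measure_affine_le_pos assms(3))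

lemma cdf_bootstrap_law_gap_le:
  assumes \<eta>: "real_distribution \<eta>" and \<eta>': "real_distribution \<eta>'" and Rm: "real_distribution Rm"
    and "0 < \<gamma>"
  shows "\<bar>cdf (bootstrap_law \<gamma> Rm \<eta>) t - cdf (bootstrap_law \<gamma> Rm \<eta>') t\<bar>
    \<le> (\<integral>r. \<bar>cdf \<eta> ((t - r) / \<gamma>) - cdf \<eta>' ((t - r) / \<gamma>)\<bar> \<partial>Rm)"
proof -
  have "cdf (bootstrap_law \<gamma> Rm \<eta>) t - cdf (bootstrap_law \<gamma> Rm \<eta>') t
      = (\<integral>r. cdf \<eta> ((t - r) / \<gamma>) - cdf \<eta>' ((t - r) / \<gamma>) \<partial>Rm)"
    unfolding cdf_bootstrap_law[OF \<eta> Rm] cdf_bootstrap_law[OF \<eta>' Rm] using \<open>0 < \<gamma>\<close>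
    by (simp add: measure_affine_le_pos integrable_cdf_affine assms)
  then show ?thesis
    using integral_abs_bound by simp
qed

lemma nn_integral_cdf_gap_affine:
  assumes "real_distribution \<eta>" "real_distribution \<eta>'" "0 < \<gamma>"
  shows "(\<integral>\<^sup>+t. ennreal \<bar>cdf \<eta> ((t - r) / \<gamma>) - cdf \<eta>' ((t - r) / \<gamma>)\<bar> \<partial>lborel)
    = ennreal \<gamma> * wasserstein1 \<eta> \<eta>'"
proof -
  note [measurable] = borel_measurable_cdf[OF assms(1)] borel_measurable_cdf[OF assms(2)]
  have "(\<integral>\<^sup>+t. ennreal \<bar>cdf \<eta> ((t - r) / \<gamma>) - cdf \<eta>' ((t - r) / \<gamma>)\<bar> \<partial>lborel)
      = ennreal \<bar>\<gamma>\<bar> * (\<integral>\<^sup>+t. ennreal \<bar>cdf \<eta> ((r + \<gamma> * t - r) / \<gamma>) - cdf \<eta>' ((r + \<gamma> * t - r) / \<gamma>)\<bar> \<partial>lborel)"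
    by (rule nn_integral_real_affine) (use assms(3) in auto)
  then show ?thesis
    using assms(3) by (simp add: wasserstein1_def)
qed

lemma wasserstein1_bootstrap_law_le:
  assumes \<eta>: "real_distribution \<eta>" and \<eta>': "real_distribution \<eta>'" and Rm: "real_distribution Rm"
    and "0 \<le> \<gamma>"
  shows "wasserstein1 (bootstrap_law \<gamma> Rm \<eta>) (bootstrap_law \<gamma> Rm \<eta>') \<le> ennreal \<gamma> * wasserstein1 \<eta> \<eta>'"
proof (cases "\<gamma> = 0")
  case True
  have "cdf (bootstrap_law \<gamma> Rm \<eta>) t = cdf (bootstrap_law \<gamma> Rm \<eta>') t" for t
    unfolding cdf_bootstrap_law[OF \<eta> Rm] cdf_bootstrap_law[OF \<eta>' Rm]
      measure_affine_le_zero[OF \<eta> True] measure_affine_le_zero[OF \<eta>' True] ..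
  then show ?thesis
    by (simp add: wasserstein1_def)
next
  case False
  with \<open>0 \<le> \<gamma>\<close> have \<gamma>: "0 < \<gamma>"
    by simp
  interpret Rm: real_distribution Rm
    by (rule Rm)
  define gap where "gap r t = ennreal \<bar>cdf \<eta> ((t - r) / \<gamma>) - cdf \<eta>' ((t - r) / \<gamma>)\<bar>" for r t
  have "wasserstein1 (bootstrap_law \<gamma> Rm \<eta>) (bootstrap_law \<gamma> Rm \<eta>') \<le> (\<integral>\<^sup>+t. (\<integral>\<^sup>+r. gap r t \<partial>Rm) \<partial>lborel)"
    unfolding wasserstein1_def
  proof (rule nn_integral_mono)
    fix t
    have "integrable Rm (\<lambda>r. \<bar>cdf \<eta> ((t - r) / \<gamma>) - cdf \<eta>' ((t - r) / \<gamma>)\<bar>)"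
      by (intro integrable_abs Bochner_Integration.integrable_diff integrable_cdf_affine assms \<gamma>)
    then have "(\<integral>\<^sup>+r. gap r t \<partial>Rm) = ennreal (\<integral>r. \<bar>cdf \<eta> ((t - r) / \<gamma>) - cdf \<eta>' ((t - r) / \<gamma>)\<bar> \<partial>Rm)"
      unfolding gap_def by (intro nn_integral_eq_integral) auto
    then show "ennreal \<bar>cdf (bootstrap_law \<gamma> Rm \<eta>) t - cdf (bootstrap_law \<gamma> Rm \<eta>') t\<bar> \<le> (\<integral>\<^sup>+r. gap r t \<partial>Rm)"
      using cdf_bootstrap_law_gap_le[OF \<eta> \<eta>' Rm \<gamma>] by (simp add: ennreal_leI)
  qed
  also have "\<dots> = (\<integral>\<^sup>+r. (\<integral>\<^sup>+t. gap r t \<partial>lborel) \<partial>Rm)"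
  proof (rule pair_sigma_finite.Fubini')
    show "pair_sigma_finite Rm lborel"
      by (intro pair_sigma_finite.intro Rm.sigma_finite_measure_axioms lborel.sigma_finite_measure_axioms)
    note [measurable] = borel_measurable_cdf[OF \<eta>] borel_measurable_cdf[OF \<eta>']
    show "case_prod gap \<in> borel_measurable (Rm \<Otimes>\<^sub>M lborel)"
      unfolding gap_def
      by (subst measurable_cong_sets[OF sets_pair_measure_cong[OF Rm.events_eq_borel sets_lborel] refl])
        measurable
  qed
  also have "\<dots> = ennreal \<gamma> * wasserstein1 \<eta> \<eta>'"
    unfolding gap_def nn_integral_cdf_gap_affine[OF \<eta> \<eta>' \<gamma>] using Rm.emeasure_space_1 by simp
  finally show ?thesis .
qed

lemma sum_ennreal_pmf_UNIV: "(\<Sum>x\<in>(UNIV :: 'x::finite set). ennreal (pmf P x)) = 1"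
  by (simp add: sum_pmf_eq_1)

lemma
  fixes p :: "'s::finite \<Rightarrow> 'a::finite \<Rightarrow> 's pmf"
  assumes \<eta>: "\<And>x a. real_distribution (\<eta> x a)" and R: "\<And>x a. real_distribution (R x a)"
  shows real_distribution_dist_bellman: "real_distribution (dist_bellman \<gamma> p \<pi> R \<eta> x a)"
    and cdf_dist_bellman: "cdf (dist_bellman \<gamma> p \<pi> R \<eta> x a) t =
      (\<Sum>x'\<in>UNIV. pmf (p x a) x' * (\<Sum>a'\<in>UNIV. pmf (\<pi> x') a' * cdf (bootstrap_law \<gamma> (R x a) (\<eta> x' a')) t))"
proof -
  have inner: "real_distribution (measure_pmf (\<pi> x') \<bind> (\<lambda>a'. bootstrap_law \<gamma> (R x a) (\<eta> x' a')))" for x'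
    by (intro real_distribution_bind_pmf real_distribution_bootstrap_law \<eta> R)
  show "real_distribution (dist_bellman \<gamma> p \<pi> R \<eta> x a)"
    unfolding dist_bellman_eq_bootstrap_law by (rule real_distribution_bind_pmf[OF inner])
  show "cdf (dist_bellman \<gamma> p \<pi> R \<eta> x a) t =
      (\<Sum>x'\<in>UNIV. pmf (p x a) x' * (\<Sum>a'\<in>UNIV. pmf (\<pi> x') a' * cdf (bootstrap_law \<gamma> (R x a) (\<eta> x' a')) t))"
    unfolding dist_bellman_eq_bootstrap_law cdf_bind_pmf[OF inner]
    by (simp add: cdf_bind_pmf real_distribution_bootstrap_law \<eta> R)
qed

lemma cdf_dist_bellman_shift:
  fixes p :: "'s::finite \<Rightarrow> 'a::finite \<Rightarrow> 's pmf"
  assumes \<eta>: "\<And>x a. real_distribution (\<eta> x a)" and \<eta>': "\<And>x a. real_distribution (\<eta>' x a)"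
    and R: "\<And>x a. real_distribution (R x a)" and "0 \<le> \<gamma>"
    and shift: "\<And>x a s. cdf (\<eta> x a) s \<le> cdf (\<eta>' x a) (s + \<epsilon>)"
  shows "cdf (dist_bellman \<gamma> p \<pi> R \<eta> x a) t \<le> cdf (dist_bellman \<gamma> p \<pi> R \<eta>' x a) (t + \<gamma> * \<epsilon>)"
  unfolding cdf_dist_bellman[OF \<eta> R] cdf_dist_bellman[OF \<eta>' R]
  by (intro sum_mono mult_left_mono cdf_bootstrap_law_shift \<eta> \<eta>' R \<open>0 \<le> \<gamma>\<close> shift pmf_nonneg)

lemma bounded_dist_bellman:
  fixes p :: "'s::finite \<Rightarrow> 'a::finite \<Rightarrow> 's pmf"
  assumes \<eta>: "\<And>x a. bounded_distribution B (\<eta> x a)" and R: "\<And>x a. real_distribution (R x a)"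
    and supp: "\<And>x a. AE r in R x a. r \<in> {-Rmax..Rmax}" and "0 \<le> \<gamma>"
  shows "bounded_distribution (Rmax + \<gamma> * B) (dist_bellman \<gamma> p \<pi> R \<eta> x a)"
proof -
  have \<eta>': "real_distribution (\<eta> x a)" for x a
    using \<eta> by (simp add: bounded_distribution_def)
  show ?thesis
    using bounded_bootstrap_law[OF \<eta> R supp \<open>0 \<le> \<gamma>\<close>] real_distribution_dist_bellman[OF \<eta>' R]
    unfolding bounded_distribution_def cdf_dist_bellman[OF \<eta>' R]
    by (simp add: sum_pmf_eq_1)
qed

lemma wasserstein1_dist_bellman_le:
  fixes p :: "'s::finite \<Rightarrow> 'a::finite \<Rightarrow> 's pmf"
  assumes \<eta>: "\<And>x a. real_distribution (\<eta> x a)" and \<eta>': "\<And>x a. real_distribution (\<eta>' x a)"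
    and R: "\<And>x a. real_distribution (R x a)" and "0 \<le> \<gamma>"
    and dist: "\<And>x a. wasserstein1 (\<eta> x a) (\<eta>' x a) \<le> e"
  shows "wasserstein1 (dist_bellman \<gamma> p \<pi> R \<eta> x a) (dist_bellman \<gamma> p \<pi> R \<eta>' x a) \<le> ennreal \<gamma> * e"
proof -
  let ?boot = "\<lambda>\<eta> x' a'. bootstrap_law \<gamma> (R x a) (\<eta> x' a')"
  have boot: "real_distribution (?boot \<eta> x' a')" "real_distribution (?boot \<eta>' x' a')" for x' a'
    by (intro real_distribution_bootstrap_law \<eta> \<eta>' R)+
  have step: "wasserstein1 (measure_pmf (\<pi> x') \<bind> ?boot \<eta> x') (measure_pmf (\<pi> x') \<bind> ?boot \<eta>' x')
      \<le> ennreal \<gamma> * e" for x'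
  proof -
    have "wasserstein1 (measure_pmf (\<pi> x') \<bind> ?boot \<eta> x') (measure_pmf (\<pi> x') \<bind> ?boot \<eta>' x')
        \<le> (\<Sum>a'\<in>UNIV. ennreal (pmf (\<pi> x') a') * wasserstein1 (?boot \<eta> x' a') (?boot \<eta>' x' a'))"
      by (rule wasserstein1_bind_pmf_le) (rule boot)+
    also have "\<dots> \<le> (\<Sum>a'\<in>UNIV. ennreal (pmf (\<pi> x') a') * (ennreal \<gamma> * e))"
      by (intro sum_mono mult_left_mono order_trans[OF wasserstein1_bootstrap_law_le] \<eta> \<eta>' R
          \<open>0 \<le> \<gamma>\<close> dist) auto
    finally show ?thesis
      by (simp add: sum_distrib_right[symmetric] sum_ennreal_pmf_UNIV)
  qed
  have "wasserstein1 (dist_bellman \<gamma> p \<pi> R \<eta> x a) (dist_bellman \<gamma> p \<pi> R \<eta>' x a)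
      \<le> (\<Sum>x'\<in>UNIV. ennreal (pmf (p x a) x') *
          wasserstein1 (measure_pmf (\<pi> x') \<bind> ?boot \<eta> x') (measure_pmf (\<pi> x') \<bind> ?boot \<eta>' x'))"
    unfolding dist_bellman_eq_bootstrap_law
    by (rule wasserstein1_bind_pmf_le) (intro real_distribution_bind_pmf boot)+
  also have "\<dots> \<le> (\<Sum>x'\<in>UNIV. ennreal (pmf (p x a) x') * (ennreal \<gamma> * e))"
    by (intro sum_mono mult_left_mono step) auto
  finally show ?thesis
    by (simp add: sum_distrib_right[symmetric] sum_ennreal_pmf_UNIV)
qed

section \<open>Uniqueness of weak limits\<close>

lemma le_if_right_cont:
  fixes f :: "real \<Rightarrow> real"
  assumes "continuous (at_right t) f" "\<And>d. 0 < d \<Longrightarrow> c \<le> f (t + d)"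
  shows "c \<le> f t"
proof (rule tendsto_lowerbound)
  show "(f \<longlongrightarrow> f t) (at_right t)"
    using assms(1) by (simp add: continuous_within)
  show "eventually (\<lambda>s. c \<le> f s) (at_right t)"
    unfolding eventually_at_right_field
  proof (intro exI[of _ "t + 1"] conjI allI impI)
    fix s
    assume "t < s" "s < t + 1"
    then show "c \<le> f s"
      using assms(2)[of "s - t"] by simp
  qed simp
qed simp

lemma exists_common_continuity_point:
  assumes "real_distribution \<mu>" "real_distribution \<nu>" "t < u"
  shows "\<exists>s\<in>{t<..<u}. isCont (cdf \<mu>) s \<and> isCont (cdf \<nu>) s"
proof -
  have "countable ({s. \<not> isCont (cdf \<mu>) s} \<union> {s. \<not> isCont (cdf \<nu>) s})"
    using assms(1,2) by (auto intro!: mono_ctble_discont simp: mono_def real_distribution_cdf_mono)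
  from open_minus_countable[OF this] assms(3) show ?thesis
    by auto
qed

lemma cdf_le_if_eq_on_continuity_points:
  assumes \<mu>: "real_distribution \<mu>" and \<nu>: "real_distribution \<nu>"
    and eq: "\<And>s. isCont (cdf \<mu>) s \<Longrightarrow> isCont (cdf \<nu>) s \<Longrightarrow> cdf \<mu> s = cdf \<nu> s"
  shows "cdf \<mu> t \<le> cdf \<nu> t"
proof (rule le_if_right_cont[where f="cdf \<nu>"])
  show "continuous (at_right t) (cdf \<nu>)"
    by (rule finite_borel_measure.cdf_is_right_cont[OF real_distribution.finite_borel_measure_M[OF \<nu>]])
  fix d :: real
  assume "0 < d"
  then obtain s where s: "t < s" "s < t + d" "isCont (cdf \<mu>) s" "isCont (cdf \<nu>) s"
    using exists_common_continuity_point[OF \<mu> \<nu>, of t "t + d"] by auto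
  have "cdf \<mu> t \<le> cdf \<mu> s"
    using s by (intro real_distribution_cdf_mono \<mu>) simp
  also have "\<dots> = cdf \<nu> s"
    by (rule eq[OF s(3,4)])
  also have "\<dots> \<le> cdf \<nu> (t + d)"
    using s by (intro real_distribution_cdf_mono \<nu>) simp
  finally show "cdf \<mu> t \<le> cdf \<nu> (t + d)" .
qed

lemma weak_conv_m_unique:
  assumes \<mu>: "real_distribution \<mu>" and \<nu>: "real_distribution \<nu>"
    and "weak_conv_m M \<mu>" "weak_conv_m M \<nu>"
  shows "\<mu> = \<nu>"
proof (rule cdf_unique[OF \<mu> \<nu>])
  have eq: "cdf \<mu> s = cdf \<nu> s" if "isCont (cdf \<mu>) s" "isCont (cdf \<nu>) s" for s
    using assms(3,4) that unfolding weak_conv_m_def weak_conv_def by (blast intro: LIMSEQ_unique)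
  show "cdf \<mu> = cdf \<nu>"
  proof (intro ext antisym)
    show "cdf \<mu> t \<le> cdf \<nu> t" for t
      by (rule cdf_le_if_eq_on_continuity_points[OF \<mu> \<nu> eq])
    show "cdf \<nu> t \<le> cdf \<mu> t" for t
      by (rule cdf_le_if_eq_on_continuity_points[OF \<nu> \<mu>]) (metis eq)
  qed
qed

section \<open>The law of the return\<close>

locale mdp =
  fixes \<gamma> Rmax :: real and p :: "'s::finite \<Rightarrow> 'a::finite \<Rightarrow> 's pmf"
    and \<pi> :: "'s \<Rightarrow> 'a pmf" and R :: "'s \<Rightarrow> 'a \<Rightarrow> real measure"
  assumes discount_nonneg: "0 \<le> \<gamma>" and discount_less_1: "\<gamma> < 1" and Rmax_pos: "0 < Rmax"
    and real_distribution_reward: "\<And>x a. real_distribution (R x a)"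
    and reward_bounded: "\<And>x a. AE r in R x a. r \<in> {-Rmax..Rmax}"
begin

definition Vmax :: real where
  "Vmax = Rmax / (1 - \<gamma>)"

abbreviation horizon :: "nat \<Rightarrow> 's \<Rightarrow> 'a \<Rightarrow> real measure" where
  "horizon n \<equiv> horizon_return \<gamma> p \<pi> R n"

definition tail_width :: "nat \<Rightarrow> real" where
  "tail_width n = 2 * Vmax * \<gamma> ^ n"

lemma Vmax_pos: "0 < Vmax"
  using discount_less_1 Rmax_pos by (simp add: Vmax_def)

lemma Rmax_add_discount_Vmax: "Rmax + \<gamma> * Vmax = Vmax"
  using discount_less_1 by (simp add: Vmax_def field_simps)

lemma tail_width_nonneg: "0 \<le> tail_width n"
  using Vmax_pos discount_nonneg by (simp add: tail_width_def)

lemma tail_width_Suc: "tail_width (Suc n) = \<gamma> * tail_width n"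
  by (simp add: tail_width_def)

lemma tail_width_tendsto_0: "tail_width \<longlonglongrightarrow> 0"
  unfolding tail_width_def using discount_nonneg discount_less_1
  by (intro tendsto_mult_right_zero LIMSEQ_power_zero) simp

lemma horizon_Suc: "horizon (Suc n) x a = dist_bellman \<gamma> p \<pi> R (horizon n) x a"
  by (simp add: dist_bellman_def)

lemma bounded_horizon: "bounded_distribution Vmax (horizon n x a)"
proof (induction n arbitrary: x a)
  case 0
  have "real_distribution (return borel (0::real))"
    by (simp add: real_distribution_def real_distribution_axioms_def prob_space_return)
  moreover have "cdf (return borel (0::real)) t = (if 0 \<le> t then 1 else 0)" for t
    unfolding cdf_def by (simp add: measure_return)
  ultimately show ?case
    using Vmax_pos by (simp add: bounded_distribution_def)
next
  case (Suc n)
  have "bounded_distribution (Rmax + \<gamma> * Vmax) (dist_bellman \<gamma> p \<pi> R (horizon n) x a)"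
    by (rule bounded_dist_bellman[OF Suc.IH real_distribution_reward reward_bounded discount_nonneg])
  then show ?case
    unfolding horizon_Suc Rmax_add_discount_Vmax .
qed

lemma real_distribution_horizon: "real_distribution (horizon n x a)"
  using bounded_horizon by (simp add: bounded_distribution_def)

(* Any two laws supported in [-Vmax, Vmax] are 2 Vmax-shift close, and each Bellman step
   shrinks the shift by the factor \<gamma>. *)
lemma horizon_shift_close: "cdf_shift_close (tail_width n) (horizon (n + m) x a) (horizon n x a)"
proof (induction n arbitrary: x a)
  case 0
  show ?case
    using bounded_distribution_cdf_shift_close[OF bounded_horizon bounded_horizon less_imp_le[OF Vmax_pos]]
    by (simp add: tail_width_def del: horizon_return.simps)
next
  case (Suc n)
  then show ?case
    unfolding cdf_shift_close_def add_Suc horizon_Suc tail_width_Suc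
    by (metis cdf_dist_bellman_shift real_distribution_horizon real_distribution_reward discount_nonneg)
qed

(* Shifting a horizon CDF to the right by the width of the discarded discounted tail bounds the
   CDF of the full return from above; the best such bound is that CDF itself. *)
definition return_cdf :: "'s \<Rightarrow> 'a \<Rightarrow> real \<Rightarrow> real" where
  "return_cdf x a t = (INF n. cdf (horizon n x a) (t + tail_width n))"

lemma bdd_below_horizon_cdf: "bdd_below (range (\<lambda>n. cdf (horizon n x a) (t + tail_width n)))"
  by (rule bdd_belowI[of _ 0]) (auto intro: real_distribution_cdf_nonneg real_distribution_horizon)

lemma return_cdf_le: "return_cdf x a t \<le> cdf (horizon n x a) (t + tail_width n)"
  unfolding return_cdf_def by (rule cINF_lower[OF bdd_below_horizon_cdf]) simp

lemma return_cdf_nonneg: "0 \<le> return_cdf x a t"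
  unfolding return_cdf_def
  by (rule cINF_greatest) (auto intro: real_distribution_cdf_nonneg real_distribution_horizon)

lemma return_cdf_mono: "s \<le> t \<Longrightarrow> return_cdf x a s \<le> return_cdf x a t"
  unfolding return_cdf_def[of x a t]
proof (rule cINF_greatest)
  fix n
  assume "s \<le> t"
  have "return_cdf x a s \<le> cdf (horizon n x a) (s + tail_width n)"
    by (rule return_cdf_le)
  also have "\<dots> \<le> cdf (horizon n x a) (t + tail_width n)"
    using \<open>s \<le> t\<close> by (intro real_distribution_cdf_mono real_distribution_horizon) simp
  finally show "return_cdf x a s \<le> cdf (horizon n x a) (t + tail_width n)" .
qed simp

lemma cdf_horizon_le_return_cdf: "cdf (horizon n x a) s \<le> return_cdf x a (s + tail_width n)"
  unfolding return_cdf_def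
proof (rule cINF_greatest)
  fix m
  show "cdf (horizon n x a) s \<le> cdf (horizon m x a) (s + tail_width n + tail_width m)"
  proof (cases "n \<le> m")
    case True
    then obtain k where m: "m = n + k"
      using le_Suc_ex by blast
    have "cdf (horizon n x a) s \<le> cdf (horizon m x a) (s + tail_width n)"
      using horizon_shift_close[of n k x a] unfolding m cdf_shift_close_def by blast
    also have "\<dots> \<le> cdf (horizon m x a) (s + tail_width n + tail_width m)"
      using tail_width_nonneg by (intro real_distribution_cdf_mono real_distribution_horizon) simp
    finally show ?thesis .
  next
    case False
    then obtain k where n: "n = m + k"
      using le_Suc_ex[of m n] by auto
    have "cdf (horizon n x a) s \<le> cdf (horizon m x a) (s + tail_width m)"
      using horizon_shift_close[of m k x a] unfolding n cdf_shift_close_def by blast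
    also have "\<dots> \<le> cdf (horizon m x a) (s + tail_width n + tail_width m)"
      using tail_width_nonneg[of n] by (intro real_distribution_cdf_mono real_distribution_horizon) simp
    finally show ?thesis .
  qed
qed simp

lemma return_cdf_below: "t < -Vmax \<Longrightarrow> return_cdf x a t = 0"
proof -
  assume t: "t < -Vmax"
  have "eventually (\<lambda>n. tail_width n < -Vmax - t) sequentially"
    using tail_width_tendsto_0 t by (intro order_tendstoD(2)) auto
  then obtain n where "tail_width n < -Vmax - t"
    by (auto dest: eventually_happens)
  then have "cdf (horizon n x a) (t + tail_width n) = 0"
    using bounded_horizon[of n x a] unfolding bounded_distribution_def by auto
  then show ?thesis
    using return_cdf_le[of x a t n] return_cdf_nonneg[of x a t] by simp
qed

lemma return_cdf_above: "Vmax \<le> t \<Longrightarrow> return_cdf x a t = 1"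
  using bounded_horizon tail_width_nonneg unfolding return_cdf_def bounded_distribution_def
  by (simp add: add_increasing2)

lemma return_cdf_right_cont: "continuous (at_right t) (return_cdf x a)"
proof (subst continuous_at_right_real_increasing)
  show "\<And>s t. s \<le> t \<Longrightarrow> return_cdf x a s \<le> return_cdf x a t"
    by (rule return_cdf_mono)
next
  show "\<forall>e>0. \<exists>d>0. return_cdf x a (t + d) - return_cdf x a t < e"
  proof (intro allI impI)
  fix e :: real
  assume "0 < e"
  then have "(INF n. cdf (horizon n x a) (t + tail_width n)) < return_cdf x a t + e"
    by (simp add: return_cdf_def)
  then have "\<exists>n. cdf (horizon n x a) (t + tail_width n) < return_cdf x a t + e"
    by (subst (asm) cINF_less_iff[OF _ bdd_below_horizon_cdf]) auto
  then obtain n where n: "cdf (horizon n x a) (t + tail_width n) < return_cdf x a t + e"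
    by blast
  have "continuous (at_right (t + tail_width n)) (cdf (horizon n x a))"
    using finite_borel_measure.cdf_is_right_cont[OF
        real_distribution.finite_borel_measure_M[OF real_distribution_horizon]] .
  then have "\<forall>\<epsilon>>0. \<exists>d>0. cdf (horizon n x a) (t + tail_width n + d) - cdf (horizon n x a) (t + tail_width n) < \<epsilon>"
    by (subst (asm) continuous_at_right_real_increasing)
      (auto intro: real_distribution_cdf_mono real_distribution_horizon)
  then obtain d where "0 < d"
    and d: "cdf (horizon n x a) (t + tail_width n + d) - cdf (horizon n x a) (t + tail_width n)
      < return_cdf x a t + e - cdf (horizon n x a) (t + tail_width n)"
    using n by (meson diff_gt_0_iff_gt)
  have "return_cdf x a (t + d) \<le> cdf (horizon n x a) (t + tail_width n + d)"
    using return_cdf_le[of x a "t + d" n] by (simp add: add_ac)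
  with d \<open>0 < d\<close> show "\<exists>d>0. return_cdf x a (t + d) - return_cdf x a t < e"
    by (intro exI[of _ d]) simp
  qed
qed

definition return_law :: "'s \<Rightarrow> 'a \<Rightarrow> real measure" where
  "return_law x a = interval_measure (return_cdf x a)"

lemma return_cdf_at_bot: "eventually (\<lambda>t. return_cdf x a t = 0) at_bot"
  unfolding eventually_at_bot_linorder by (auto intro!: exI[of _ "-Vmax - 1"] return_cdf_below)

lemma return_cdf_at_top: "eventually (\<lambda>t. return_cdf x a t = 1) at_top"
  unfolding eventually_at_top_linorder by (auto intro!: exI[of _ Vmax] return_cdf_above)

lemma real_distribution_return_law: "real_distribution (return_law x a)"
  using return_cdf_at_bot return_cdf_at_top unfolding return_law_def
    by (intro real_distribution_interval_measure return_cdf_mono return_cdf_right_cont)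
      (auto intro: tendsto_eventually)

lemma cdf_return_law: "cdf (return_law x a) = return_cdf x a"
  using return_cdf_at_bot unfolding return_law_def
  by (intro cdf_interval_measure return_cdf_mono return_cdf_right_cont) (auto intro: tendsto_eventually)

lemma return_law_shift_close: "cdf_shift_close (tail_width n) (return_law x a) (horizon n x a)"
  unfolding cdf_shift_close_def cdf_return_law using return_cdf_le cdf_horizon_le_return_cdf by blast

lemma bounded_return_law: "bounded_distribution Vmax (return_law x a)"
  unfolding bounded_distribution_def cdf_return_law
  using real_distribution_return_law return_cdf_below return_cdf_above by auto

lemma weak_conv_horizon: "weak_conv_m (\<lambda>n. horizon n x a) (return_law x a)"
  unfolding weak_conv_m_def weak_conv_def cdf_return_law
proof (intro allI impI)
  fix t
  assume cont: "isCont (return_cdf x a) t"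
  have "(\<lambda>n. t - tail_width n) \<longlonglongrightarrow> t"
    using tendsto_diff[OF tendsto_const tail_width_tendsto_0] by simp
  then have lower: "(\<lambda>n. return_cdf x a (t - tail_width n)) \<longlonglongrightarrow> return_cdf x a t"
    by (rule isCont_tendsto_compose[OF cont])
  have "(\<lambda>n. t + tail_width n) \<longlonglongrightarrow> t"
    using tendsto_add[OF tendsto_const tail_width_tendsto_0] by simp
  then have upper: "(\<lambda>n. return_cdf x a (t + tail_width n)) \<longlonglongrightarrow> return_cdf x a t"
    by (rule isCont_tendsto_compose[OF cont])
  show "(\<lambda>n. cdf (horizon n x a) t) \<longlonglongrightarrow> return_cdf x a t"
  proof (rule tendsto_sandwich[OF always_eventually always_eventually lower upper])
    show "\<forall>n. return_cdf x a (t - tail_width n) \<le> cdf (horizon n x a) t"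
      using return_cdf_le[of x a "t - tail_width n" n for n] by simp
    show "\<forall>n. cdf (horizon n x a) t \<le> return_cdf x a (t + tail_width n)"
      using cdf_horizon_le_return_cdf by blast
  qed
qed

lemma return_dist_eq_return_law: "return_dist \<gamma> p \<pi> R x a = return_law x a"
  unfolding return_dist_def
proof (rule the_equality)
  show "real_distribution (return_law x a) \<and> weak_conv_m (\<lambda>n. horizon n x a) (return_law x a)"
    using real_distribution_return_law weak_conv_horizon by blast
  show "\<nu> = return_law x a" if "real_distribution \<nu> \<and> weak_conv_m (\<lambda>n. horizon n x a) \<nu>" for \<nu>
    using weak_conv_m_unique[OF _ real_distribution_return_law _ weak_conv_horizon] that by blast
qed


end

section \<open>The QDRL fixed point\<close>

locale qdrl_fixpoint = mdp \<gamma> Rmax p \<pi> R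
  for \<gamma> Rmax :: real and p :: "'s::finite \<Rightarrow> 'a::finite \<Rightarrow> 's pmf"
    and \<pi> :: "'s \<Rightarrow> 'a pmf" and R :: "'s \<Rightarrow> 'a \<Rightarrow> real measure" +
  fixes K :: nat and z :: "'s \<Rightarrow> 'a \<Rightarrow> nat \<Rightarrow> real"
  assumes K_pos: "1 \<le> K"
    and fixpoint: "\<And>x a. unif_dirac K (z x a) =
      proj_W1 K (dist_bellman \<gamma> p \<pi> R (\<lambda>x' a'. unif_dirac K (z x' a')) x a)"
begin

abbreviation qdrl_law :: "'s \<Rightarrow> 'a \<Rightarrow> real measure" where
  "qdrl_law x a \<equiv> unif_dirac K (z x a)"

abbreviation bellman_qdrl_law :: "'s \<Rightarrow> 'a \<Rightarrow> real measure" where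
  "bellman_qdrl_law x a \<equiv> dist_bellman \<gamma> p \<pi> R qdrl_law x a"

(* Let B be the largest atom of the fixed point in absolute value.  The atoms are quantiles of
   the Bellman image of the fixed point, which lives in [-(Rmax + \<gamma> B), Rmax + \<gamma> B],
   so B \<le> Rmax + \<gamma> B, i.e. B \<le> Vmax. *)
lemma bounded_qdrl_law: "bounded_distribution Vmax (qdrl_law x a)"
proof -
  define atoms where "atoms = (\<lambda>(x, a, k). \<bar>z x a k\<bar>) ` (UNIV \<times> UNIV \<times> {1..K})"
  define B where "B = Max atoms"
  have "finite atoms" "atoms \<noteq> {}"
    using K_pos by (auto simp: atoms_def)
  have atom_le: "\<bar>z x a k\<bar> \<le> B" if "k \<in> {1..K}" for x a k
    unfolding B_def using that by (intro Max_ge[OF \<open>finite atoms\<close>]) (force simp: atoms_def)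
  obtain x0 a0 k0 where "k0 \<in> {1..K}" and B: "B = \<bar>z x0 a0 k0\<bar>"
    using Max_in[OF \<open>finite atoms\<close> \<open>atoms \<noteq> {}\<close>] by (auto simp: atoms_def B_def)
  have "bounded_distribution B (qdrl_law x a)" for x a
    by (intro bounded_unif_dirac K_pos atom_le)
  then have "bounded_distribution (Rmax + \<gamma> * B) (qdrl_law x a)" for x a
    by (subst fixpoint) (intro bounded_proj_W1 bounded_dist_bellman K_pos real_distribution_reward
        reward_bounded discount_nonneg)
  then have "B \<le> Rmax + \<gamma> * B"
    unfolding B by (rule abs_le_if_bounded_unif_dirac[OF K_pos _ \<open>k0 \<in> {1..K}\<close>])
  then have "B \<le> Vmax"
    using discount_less_1 by (simp add: Vmax_def pos_le_divide_eq algebra_simps)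
  then show ?thesis
    using \<open>bounded_distribution B (qdrl_law x a)\<close> by (rule bounded_distribution_mono[rotated])
qed

lemma bounded_bellman_qdrl_law: "bounded_distribution Vmax (bellman_qdrl_law x a)"
  using bounded_dist_bellman[OF bounded_qdrl_law real_distribution_reward reward_bounded discount_nonneg]
  by (simp add: Rmax_add_discount_Vmax)

(* Every projection moves a law by at most Vmax / K in W1 while the Bellman operator contracts
   by \<gamma>; the accumulated projection errors sum to this geometric series. *)
definition fixpoint_error :: real where
  "fixpoint_error = Vmax / (K * (1 - \<gamma>))"

lemma fixpoint_error_nonneg: "0 \<le> fixpoint_error"
  using Vmax_pos discount_less_1 by (simp add: fixpoint_error_def)

lemma discount_fixpoint_error_add: "\<gamma> * fixpoint_error + Vmax / K = fixpoint_error"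
  using K_pos discount_less_1 by (simp add: fixpoint_error_def field_simps)

lemma wasserstein1_bellman_qdrl_law_le: "wasserstein1 (bellman_qdrl_law x a) (qdrl_law x a) \<le> ennreal (Vmax / K)"
  using wasserstein1_proj_W1_le[OF bounded_bellman_qdrl_law K_pos less_imp_le[OF Vmax_pos]]
  by (subst fixpoint) (simp add: wasserstein1_commute)

lemma wasserstein1_horizon_qdrl_law_le:
  "wasserstein1 (horizon n x a) (qdrl_law x a) \<le> ennreal (tail_width n + fixpoint_error)"
proof (induction n arbitrary: x a)
  case 0
  have "wasserstein1 (horizon 0 x a) (qdrl_law x a) \<le> ennreal (2 * Vmax)"
    using wasserstein1_bounded_le[OF bounded_horizon bounded_qdrl_law less_imp_le[OF Vmax_pos]] .
  also have "\<dots> \<le> ennreal (tail_width 0 + fixpoint_error)"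
    using fixpoint_error_nonneg by (simp add: tail_width_def ennreal_leI)
  finally show ?case .
next
  case (Suc n)
  have "wasserstein1 (horizon (Suc n) x a) (qdrl_law x a)
      \<le> wasserstein1 (horizon (Suc n) x a) (bellman_qdrl_law x a) + wasserstein1 (bellman_qdrl_law x a) (qdrl_law x a)"
    by (intro wasserstein1_triangle real_distribution_horizon real_distribution_unif_dirac
        real_distribution_dist_bellman real_distribution_reward)
  also have "\<dots> \<le> ennreal \<gamma> * ennreal (tail_width n + fixpoint_error) + ennreal (Vmax / K)"
    unfolding horizon_Suc
    by (intro add_mono wasserstein1_dist_bellman_le Suc.IH wasserstein1_bellman_qdrl_law_le
        real_distribution_horizon real_distribution_unif_dirac real_distribution_reward discount_nonneg)
  also have "\<dots> = ennreal (\<gamma> * (tail_width n + fixpoint_error) + Vmax / K)"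
    using discount_nonneg tail_width_nonneg[of n] fixpoint_error_nonneg Vmax_pos
    by (simp add: ennreal_mult ennreal_plus)
  also have "\<gamma> * (tail_width n + fixpoint_error) + Vmax / K = tail_width (Suc n) + fixpoint_error"
    using discount_fixpoint_error_add by (simp add: tail_width_Suc algebra_simps)
  finally show ?case .
qed

lemma wasserstein1_return_qdrl_law_le: "wasserstein1 (return_law x a) (qdrl_law x a) \<le> ennreal fixpoint_error"
proof (rule LIMSEQ_le_const)
  have "(\<lambda>n. 3 * tail_width n + fixpoint_error) \<longlonglongrightarrow> 0 + fixpoint_error"
    by (intro tendsto_add tendsto_mult_right_zero tail_width_tendsto_0 tendsto_const)
  then show "(\<lambda>n. ennreal (3 * tail_width n + fixpoint_error)) \<longlonglongrightarrow> ennreal fixpoint_error"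
    by (intro tendsto_ennrealI) simp
  have "wasserstein1 (return_law x a) (qdrl_law x a) \<le> ennreal (3 * tail_width n + fixpoint_error)" for n
  proof -
    have "wasserstein1 (return_law x a) (qdrl_law x a)
        \<le> wasserstein1 (return_law x a) (horizon n x a) + wasserstein1 (horizon n x a) (qdrl_law x a)"
      by (intro wasserstein1_triangle real_distribution_return_law real_distribution_unif_dirac
          real_distribution_horizon)
    also have "\<dots> \<le> ennreal (2 * tail_width n) + ennreal (tail_width n + fixpoint_error)"
      by (intro add_mono wasserstein1_le_if_cdf_shift_close return_law_shift_close
          wasserstein1_horizon_qdrl_law_le real_distribution_return_law real_distribution_horizon
          tail_width_nonneg)
    also have "\<dots> = ennreal (3 * tail_width n + fixpoint_error)"
      using tail_width_nonneg[of n] fixpoint_error_nonneg by (simp flip: ennreal_plus)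
    finally show ?thesis .
  qed
  then show "\<exists>N. \<forall>n\<ge>N. wasserstein1 (return_law x a) (qdrl_law x a) \<le> ennreal (3 * tail_width n + fixpoint_error)"
    by blast
qed

(* The projected laws have the learnt and the true quantile statistics as their atoms, so their
   W1 distance is exactly the quantile error; bound it through the unprojected laws. *)
lemma quantile_error_le:
  "(1 / real K) * (\<Sum>k = 1..K. \<bar>quantile (return_dist \<gamma> p \<pi> R x a) (tau K k)
      - quantile (qdrl_law x a) (tau K k)\<bar>) \<le> 2 * Vmax / K + fixpoint_error"
proof -
  let ?err = "(1 / real K) * (\<Sum>k = 1..K. \<bar>quantile (return_law x a) (tau K k)
      - quantile (qdrl_law x a) (tau K k)\<bar>)"
  let ?ret = "return_law x a" and ?qdrl = "qdrl_law x a"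
  have "ennreal ?err = wasserstein1 (proj_W1 K ?ret) (proj_W1 K ?qdrl)"
    unfolding proj_W1_def
    by (intro wasserstein1_unif_dirac_sorted[symmetric] K_pos mono_on_quantile_tau
        real_distribution_return_law real_distribution_unif_dirac)
  also have "\<dots> \<le> wasserstein1 (proj_W1 K ?ret) ?ret + wasserstein1 ?ret (proj_W1 K ?qdrl)"
    unfolding proj_W1_def
    by (intro wasserstein1_triangle real_distribution_unif_dirac real_distribution_return_law)
  also have "\<dots> \<le> wasserstein1 (proj_W1 K ?ret) ?ret + (wasserstein1 ?ret ?qdrl + wasserstein1 ?qdrl (proj_W1 K ?qdrl))"
    unfolding proj_W1_def
    by (intro add_left_mono wasserstein1_triangle real_distribution_unif_dirac real_distribution_return_law)
  also have "\<dots> \<le> ennreal (Vmax / K) + (ennreal fixpoint_error + ennreal (Vmax / K))"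
    using Vmax_pos
    by (intro add_mono wasserstein1_proj_W1_le bounded_return_law bounded_qdrl_law K_pos
        wasserstein1_return_qdrl_law_le order_trans[OF eq_refl[OF wasserstein1_commute]]) simp_all
  also have "\<dots> = ennreal (2 * Vmax / K + fixpoint_error)"
    using Vmax_pos fixpoint_error_nonneg by (simp flip: ennreal_plus add: add_divide_distrib)
  finally have "ennreal ?err \<le> ennreal (2 * Vmax / K + fixpoint_error)" .
  moreover have "0 \<le> 2 * Vmax / K + fixpoint_error"
    using Vmax_pos fixpoint_error_nonneg by simp
  ultimately have "?err \<le> 2 * Vmax / K + fixpoint_error"
    by (simp only: ennreal_le_iff)
  then show ?thesis
    by (simp add: return_dist_eq_return_law)
qed

(* The bound obtained is Rmax (3 - 2 \<gamma>) / ((1 - \<gamma>)^2 K), a bit better than the one claimed. *)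
lemma quantile_error_bound_le: "2 * Vmax / K + fixpoint_error \<le> 2 * Rmax * (5 - 2 * \<gamma>) / ((1 - \<gamma>)^2 * K)"
proof -
  define u where "u = 1 - \<gamma>"
  have "u \<noteq> 0" "real K \<noteq> 0"
    using discount_less_1 K_pos by (auto simp: u_def)
  then have "2 * Vmax / K + fixpoint_error = Rmax * (2 * u + 1) / (u^2 * K)"
    unfolding Vmax_def fixpoint_error_def u_def[symmetric] by (simp add: field_simps power2_eq_square)
  also have "2 * u + 1 = 3 - 2 * \<gamma>"
    by (simp add: u_def)
  finally have "2 * Vmax / K + fixpoint_error = Rmax * (3 - 2 * \<gamma>) / ((1 - \<gamma>)^2 * K)"
    by (simp add: u_def)
  also have "\<dots> \<le> 2 * Rmax * (5 - 2 * \<gamma>) / ((1 - \<gamma>)^2 * K)"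
  proof (rule divide_right_mono)
    have "Rmax * (3 - 2 * \<gamma>) \<le> Rmax * (2 * (5 - 2 * \<gamma>))"
      using Rmax_pos discount_less_1 by (intro mult_left_mono) auto
    then show "Rmax * (3 - 2 * \<gamma>) \<le> 2 * Rmax * (5 - 2 * \<gamma>)"
      by (simp only: mult.assoc mult.left_commute[of 2 Rmax])
  qed simp
  finally show ?thesis .
qed

end

theorem theorem3:
  fixes \<gamma> Rmax :: real and K :: nat
    and p :: "'s::finite \<Rightarrow> 'a::finite \<Rightarrow> 's pmf"
    and \<pi> :: "'s \<Rightarrow> 'a pmf"
    and R :: "'s \<Rightarrow> 'a \<Rightarrow> real measure"
    and z :: "'s \<Rightarrow> 'a \<Rightarrow> nat \<Rightarrow> real"
  assumes "0 \<le> \<gamma>" and "\<gamma> < 1" and "Rmax > 0" and "K \<ge> 1"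
    and "\<And>x a. real_distribution (R x a)"
    and "\<And>x a. AE r in R x a. r \<in> {-Rmax..Rmax}"
    and "\<And>x a. unif_dirac K (z x a) =
           proj_W1 K (dist_bellman \<gamma> p \<pi> R (\<lambda>x' a'. unif_dirac K (z x' a')) x a)"
  shows "(SUP (x, a) \<in> UNIV.
           (1 / real K) * (\<Sum>k = 1..K.
              \<bar>quantile (return_dist \<gamma> p \<pi> R x a) (tau K k)
               - quantile (unif_dirac K (z x a)) (tau K k)\<bar>))
         \<le> 2 * Rmax * (5 - 2 * \<gamma>) / ((1 - \<gamma>)^2 * real K)"
proof -
  interpret qdrl_fixpoint \<gamma> Rmax p \<pi> R K z
    by (intro qdrl_fixpoint.intro mdp.intro qdrl_fixpoint_axioms.intro) (rule assms)+
  show ?thesis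
    using order_trans[OF quantile_error_le quantile_error_bound_le] by (intro cSUP_least) auto
qed

end
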